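(* There is an absolute constant $C>0$ such that the following holds. Let $q$ be a prime, let $\delta$ be a positive integer with $\delta\leq\frac{\log q}{\log 2}$, and let $n\geq\delta q$ be an integer. Let $A:=\frac{1}{n!}\sum_{\pi\in S_n}\bigl(c_1(\pi^q)\bigr)^{\delta}$. Then: if $\delta=1$, $A=\sigma_0(q)$; if $\delta=2$, $A=\sigma_1(q)+\sigma_0(q)^2$; if $\delta\geq3$, $\left|A-\sigma_{\delta-1}(q)-q^{\delta-2}\left(\delta+2^{\delta-1}-1\right)\right|\leq C\,3^{\delta}q^{\delta-3}$.
   Context: For $\pi\in S_n$, $c_1(\pi^q)$ is the number of fixed points of the permutation $\pi^q$. For real $\alpha$, $\sigma_\alpha(q)=\sum_{d\mid q}d^\alpha$. *)

theory Defs
  imports Complex_Main "HOL-Combinatorics.Permutations" "HOL-Computational_Algebra.Primes"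
begin

definition c1 :: "nat \<Rightarrow> (nat \<Rightarrow> nat) \<Rightarrow> nat" where
  "c1 n \<pi> = card {i \<in> {..<n}. \<pi> i = i}"

definition sigma :: "real \<Rightarrow> nat \<Rightarrow> real" where
  "sigma \<alpha> q = (\<Sum>d\<in>{d. d dvd q}. real d powr \<alpha>)"

definition momentA :: "nat \<Rightarrow> nat \<Rightarrow> nat \<Rightarrow> real" where
  "momentA n q \<delta> = (\<Sum>\<pi>\<in>{\<pi>. \<pi> permutes {..<n}}. real (c1 n (\<pi> ^^ q)) ^ \<delta>) / fact n"

end

theory Submission
  imports Defs "HOL-Combinatorics.Cycles" "HOL-Combinatorics.Stirling" "HOL-Real_Asymp.Real_Asymp"
begin

(* For prime q a point is fixed by pi^q iff its pi-cycle has length 1 or q, so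
   c1(pi^q) = F + q Q with F the number of fixed points and Q the number of q-cycles of pi.
   Splitting off the cycle through one point gives a recursion showing that, for i + q j <= n,
   the joint factorial moments E[(F choose i) (Q choose j)] = 1 / (i! j! q^j) are exactly those
   of independent Poisson variables with means 1 and 1/q.  Expanding powers in falling factorials
   (Stirling numbers S of the second kind) then gives, for delta q <= n,
     A = sum_a (delta choose a) B_a T_(delta-a)(q),   T_b(q) = sum_j S(b,j) q^(b-j),
   with B_a the Bell numbers.  The terms of order q^(delta-1) and q^(delta-2) (a = 0 with j <= 2,
   a = 1 with j = 1) add up to q^(delta-1) + q^(delta-2) (delta + 2^(delta-1) - 1), while
   sigma_(delta-1)(q) = 1 + q^(delta-1).
   Once q >= 2^delta every other term is at most poly(delta) 2^delta q^(delta-3), except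
   S(delta,3) q^(delta-3) <= 3^delta q^(delta-3). *)

section \<open>Splitting off the cycle through a point\<close>

definition fix_count :: "'a set \<Rightarrow> ('a \<Rightarrow> 'a) \<Rightarrow> nat" where
  "fix_count A f = card {x \<in> A. f x = x}"

lemma funpow_eq_on_invariant:
  assumes "\<And>x. x \<in> S \<Longrightarrow> f x = g x" and "\<And>x. x \<in> S \<Longrightarrow> g x \<in> S" and "x \<in> S"
  shows "(f ^^ k) x = (g ^^ k) x"
  using assms(3)
  by (induction k arbitrary: x) (simp_all add: assms(1,2) funpow_Suc_right del: funpow.simps)

locale cycle_split =
  fixes A :: "'a set" and cs :: "'a list" and \<rho> p :: "'a \<Rightarrow> 'a"
  assumes distinct_cs: "distinct cs" and set_cs_subset: "set cs \<subseteq> A"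
    and \<rho>_permutes: "\<rho> permutes (A - set cs)" and p_def: "p = cycle_of_list cs \<circ> \<rho>"
begin

lemma \<rho>_on_cycle: "x \<in> set cs \<Longrightarrow> \<rho> x = x"
  using \<rho>_permutes by (meson DiffD2 permutes_not_in)

lemma \<rho>_off_cycle: "x \<notin> set cs \<Longrightarrow> \<rho> x \<notin> set cs"
  using \<rho>_permutes by (metis Diff_iff permutes_in_image permutes_not_in)

lemma p_off_cycle: "x \<notin> set cs \<Longrightarrow> p x = \<rho> x"
  using id_outside_supp[OF \<rho>_off_cycle] by (simp add: p_def)

lemma p_on_cycle: "x \<in> set cs \<Longrightarrow> p x = cycle_of_list cs x"
  by (simp add: p_def \<rho>_on_cycle)

lemma funpow_off_cycle: "x \<notin> set cs \<Longrightarrow> (p ^^ k) x = (\<rho> ^^ k) x"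
  by (rule funpow_eq_on_invariant[of "- set cs"]) (simp_all add: p_off_cycle \<rho>_off_cycle)

lemma funpow_on_cycle: "x \<in> set cs \<Longrightarrow> (p ^^ k) x = (cycle_of_list cs ^^ k) x"
  by (rule funpow_eq_on_invariant[of "set cs"])
    (simp_all add: p_on_cycle permutes_in_image[OF cycle_permutes])

lemma funpow_nth_cycle:
  assumes "i < length cs"
  shows "(p ^^ k) (cs ! i) = cs ! ((i + k) mod length cs)"
proof -
  have "(p ^^ k) (cs ! i) = map (cycle_of_list cs ^^ k) cs ! i"
    using assms funpow_on_cycle[of "cs ! i" k] by simp
  also have "\<dots> = rotate k cs ! i"
    by (simp only: cyclic_rotation[OF distinct_cs])
  finally show ?thesis
    using assms by (simp add: nth_rotate add.commute)
qed

lemma funpow_fixed_on_cycle_iff: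
  assumes "x \<in> set cs"
  shows "(p ^^ k) x = x \<longleftrightarrow> length cs dvd k"
proof -
  obtain i where i: "i < length cs" "x = cs ! i"
    using assms by (metis in_set_conv_nth)
  have lt: "(i + k) mod length cs < length cs"
    using i(1) by (intro mod_less_divisor) linarith
  have "(p ^^ k) x = x \<longleftrightarrow> (i + k) mod length cs = i"
    using nth_eq_iff_index_eq[OF distinct_cs lt i(1)] by (simp add: i(2) funpow_nth_cycle[OF i(1)])
  also have "\<dots> \<longleftrightarrow> length cs dvd k"
    using i(1) by (metis diff_add_inverse le_add1 mod_eq_dvd_iff_nat mod_less)
  finally show ?thesis .
qed

lemma fix_count_funpow:
  assumes "finite A"
  shows "fix_count A (p ^^ k) =
    fix_count (A - set cs) (\<rho> ^^ k) + (if length cs dvd k then length cs else 0)"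
proof -
  have "{x \<in> A. (p ^^ k) x = x} =
      {x \<in> A - set cs. (\<rho> ^^ k) x = x} \<union> {x \<in> set cs. length cs dvd k}"
    using set_cs_subset funpow_off_cycle funpow_fixed_on_cycle_iff by (auto; metis)
  then have "fix_count A (p ^^ k) =
      fix_count (A - set cs) (\<rho> ^^ k) + card {x \<in> set cs. length cs dvd k}"
    unfolding fix_count_def using assms by (simp only:) (rule card_Un_disjoint; auto)
  then show ?thesis
    using distinct_card[OF distinct_cs] by simp
qed

lemma p_permutes: "p permutes A"
  unfolding p_def
  using \<rho>_permutes cycle_permutes set_cs_subset
  by (metis Diff_subset permutes_compose permutes_subset)

lemma restrict_off_cycle: "(\<lambda>y. if y \<in> A - set cs then p y else y) = \<rho>"
  using p_off_cycle \<rho>_permutes by (auto simp: permutes_not_in)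

lemma support_hd:
  assumes "cs \<noteq> []"
  shows "support p (hd cs) = cs"
proof -
  have hd: "hd cs = cs ! 0"
    using assms by (simp add: hd_conv_nth)
  have "least_power p (hd cs) = length cs"
    unfolding least_power_def
  proof (rule Least_equality)
    show "(p ^^ length cs) (hd cs) = hd cs \<and> 0 < length cs"
      using assms funpow_fixed_on_cycle_iff[of "hd cs" "length cs"] by simp
    show "length cs \<le> k" if "(p ^^ k) (hd cs) = hd cs \<and> 0 < k" for k
      using that assms funpow_fixed_on_cycle_iff[of "hd cs" k] by (simp add: dvd_imp_le)
  qed
  then show ?thesis
    using hd assms by (intro nth_equalityI) (auto simp: funpow_nth_cycle)
qed

end

lemma cycle_split_support:
  assumes p: "p permutes A" and A: "finite A" and a: "a \<in> A"
  defines "s \<equiv> support p a"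
  shows "cycle_split A s (\<lambda>y. if y \<in> A - set s then p y else y) p"
    and "s = a # tl s"
proof -
  define \<rho> where "\<rho> = (\<lambda>y. if y \<in> A - set s then p y else y)"
  have perm: "permutation p"
    using p A permutation_permutes by blast
  show "s = a # tl s"
    using least_power_of_permutation(2)[OF perm, of a] by (simp add: s_def upt_conv_Cons)
  have \<rho>: "\<rho> permutes (A - set s)"
    unfolding \<rho>_def s_def using semidecomposition[OF p A] .
  have set_s: "set s \<subseteq> A"
    using permutes_in_image[OF permutes_funpow[OF p]] a by (auto simp: s_def)
  have p_eq: "p = cycle_of_list s \<circ> \<rho>"
  proof
    fix y
    show "p y = (cycle_of_list s \<circ> \<rho>) y"
    proof (cases "y \<in> set s")
      case True
      then show ?thesis
        using cycle_restrict[OF perm] by (simp add: \<rho>_def s_def)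
    next
      case off: False
      show ?thesis
      proof (cases "y \<in> A")
        case True
        then have "\<rho> y \<in> A - set s"
          using off permutes_in_image[OF \<rho>, of y] by simp
        moreover have "\<rho> y = p y"
          using True off by (simp add: \<rho>_def)
        ultimately show ?thesis
          by (simp add: id_outside_supp)
      next
        case False
        then show ?thesis
          using off p by (simp add: \<rho>_def id_outside_supp permutes_not_in)
      qed
    qed
  qed
  from cycle_of_permutation[OF perm, of a, folded s_def] set_s \<rho> p_eq
  show "cycle_split A s \<rho> p"
    by (rule cycle_split.intro)
qed

definition cycle_splittings :: "'a set \<Rightarrow> 'a \<Rightarrow> ('a list \<times> ('a \<Rightarrow> 'a)) set" where
  "cycle_splittings A a =
    (SIGMA xs:{xs. distinct xs \<and> set xs \<subseteq> A - {a}}. {\<rho>. \<rho> permutes (A - set (a # xs))})"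

lemma cycle_split_cycle_splittings:
  assumes "(xs, \<rho>) \<in> cycle_splittings A a" and "a \<in> A"
  shows "cycle_split A (a # xs) \<rho> (cycle_of_list (a # xs) \<circ> \<rho>)"
  using assms by unfold_locales (auto simp: cycle_splittings_def)

lemma cycle_splitting_of_permutes:
  assumes p: "p permutes A" and A: "finite A" and a: "a \<in> A"
  defines "\<rho> \<equiv> \<lambda>y. if y \<in> A - set (support p a) then p y else y"
  shows "(tl (support p a), \<rho>) \<in> cycle_splittings A a"
    and "cycle_of_list (a # tl (support p a)) \<circ> \<rho> = p"
proof -
  note split = cycle_split_support[OF p A a]
  interpret cycle_split A "support p a" \<rho> p
    unfolding \<rho>_def by (rule split(1))
  have "distinct (a # tl (support p a))" "set (a # tl (support p a)) \<subseteq> A"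
    "\<rho> permutes (A - set (a # tl (support p a)))"
    using distinct_cs set_cs_subset \<rho>_permutes by (simp_all only: split(2)[symmetric])
  then show "(tl (support p a), \<rho>) \<in> cycle_splittings A a"
    unfolding cycle_splittings_def by auto
  show "cycle_of_list (a # tl (support p a)) \<circ> \<rho> = p"
    using p_def by (simp only: split(2)[symmetric])
qed

lemma bij_betw_cycle_splittings:
  assumes A: "finite A" and a: "a \<in> A"
  shows "bij_betw (\<lambda>(xs, \<rho>). cycle_of_list (a # xs) \<circ> \<rho>) (cycle_splittings A a) {p. p permutes A}"
proof -
  define f :: "'a list \<times> ('a \<Rightarrow> 'a) \<Rightarrow> 'a \<Rightarrow> 'a"
    where "f = (\<lambda>(xs, \<rho>). cycle_of_list (a # xs) \<circ> \<rho>)"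
  define g where "g p = (tl (support p a), \<lambda>y. if y \<in> A - set (support p a) then p y else y)" for p
  have "bij_betw f (cycle_splittings A a) {p. p permutes A}"
  proof (rule bij_betw_byWitness[where f' = g])
    show "\<forall>d\<in>cycle_splittings A a. g (f d) = d"
    proof
      fix d assume d: "d \<in> cycle_splittings A a"
      obtain xs \<rho> where d_eq: "d = (xs, \<rho>)"
        by fastforce
      interpret cycle_split A "a # xs" \<rho> "cycle_of_list (a # xs) \<circ> \<rho>"
        using d a unfolding d_eq by (rule cycle_split_cycle_splittings)
      have "support (cycle_of_list (a # xs) \<circ> \<rho>) a = a # xs"
        using support_hd by simp
      then show "g (f d) = d"
        using restrict_off_cycle by (simp add: d_eq f_def g_def)
    qed
    show "\<forall>p\<in>{p. p permutes A}. f (g p) = p"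
      using cycle_splitting_of_permutes(2)[OF _ A a] by (simp add: f_def g_def)
    show "f ` cycle_splittings A a \<subseteq> {p. p permutes A}"
      using cycle_split.p_permutes[OF cycle_split_cycle_splittings[OF _ a]] by (auto simp: f_def)
    show "g ` {p. p permutes A} \<subseteq> cycle_splittings A a"
      using cycle_splitting_of_permutes(1)[OF _ A a] by (auto simp: g_def)
  qed
  then show ?thesis
    unfolding f_def .
qed

lemma sum_permutes_cycle_splittings:
  assumes A: "finite A" and a: "a \<in> A"
  shows "(\<Sum>p | p permutes A. g p) =
    (\<Sum>xs | distinct xs \<and> set xs \<subseteq> A - {a}.
       \<Sum>\<rho> | \<rho> permutes (A - set (a # xs)). g (cycle_of_list (a # xs) \<circ> \<rho>))"
proof -
  have "finite {xs. distinct xs \<and> set xs \<subseteq> A - {a}}"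
    using finite_subset_distinct[of "A - {a}"] A by (simp add: conj_commute)
  then show ?thesis
    using sum.reindex_bij_betw[OF bij_betw_cycle_splittings[OF A a], of g]
    by (simp add: cycle_splittings_def sum.Sigma finite_permutations A split_beta)
qed

section \<open>Fixed points of \<open>p ^^ q\<close>\<close>

lemma fix_count_le_funpow:
  assumes "finite A"
  shows "fix_count A f \<le> fix_count A (f ^^ k)"
  unfolding fix_count_def using assms funpow_mod_eq[where f = f and n = 1 and m = k]
  by (intro card_mono) auto

text \<open>For prime \<open>q\<close> the points of exact period \<open>q\<close> fill the \<open>q\<close>-cycles, so this counts them.\<close>
definition q_cycles :: "nat \<Rightarrow> 'a set \<Rightarrow> ('a \<Rightarrow> 'a) \<Rightarrow> nat" where
  "q_cycles q A p = (fix_count A (p ^^ q) - fix_count A p) div q"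

context cycle_split
begin

lemma fix_count_split:
  assumes "finite A"
  shows "fix_count A p = fix_count (A - set cs) \<rho> + (if length cs = 1 then 1 else 0)"
  using fix_count_funpow[OF assms, of 1] by simp

lemma period_count_split:
  assumes A: "finite A" and q: "prime q"
  shows "fix_count A (p ^^ q) - fix_count A p =
    fix_count (A - set cs) (\<rho> ^^ q) - fix_count (A - set cs) \<rho> + (if length cs = q then q else 0)"
proof -
  have "length cs dvd q \<longleftrightarrow> length cs = 1 \<or> length cs = q"
    using q by (auto simp: prime_nat_iff)
  moreover have "q \<noteq> 1"
    using q by auto
  ultimately have "fix_count A (p ^^ q) = fix_count (A - set cs) (\<rho> ^^ q) +
      (if length cs = 1 then 1 else 0) + (if length cs = q then q else 0)"
    using fix_count_funpow[OF A, of q] by auto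
  moreover have "fix_count (A - set cs) \<rho> \<le> fix_count (A - set cs) (\<rho> ^^ q)"
    using A by (simp add: fix_count_le_funpow)
  ultimately show ?thesis
    using fix_count_split[OF A] by (cases "length cs = 1"; cases "length cs = q") simp_all
qed

lemma q_cycles_split:
  assumes "finite A" and "prime q"
  shows "q_cycles q A p = q_cycles q (A - set cs) \<rho> + (if length cs = q then 1 else 0)"
  using period_count_split[OF assms] prime_gt_0_nat[OF assms(2)]
  unfolding q_cycles_def by simp

end

lemma prime_dvd_period_count:
  assumes "finite A" and q: "prime q" and "p permutes A"
  shows "q dvd fix_count A (p ^^ q) - fix_count A p"
  using assms(1,3)
proof (induction "card A" arbitrary: A p rule: less_induct)
  case less
  show ?case
  proof (cases "A = {}")
    case True
    then show ?thesis by (simp add: fix_count_def)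
  next
    case False
    then obtain a where a: "a \<in> A" by blast
    define s where "s = support p a"
    define \<rho> where "\<rho> = (\<lambda>y. if y \<in> A - set s then p y else y)"
    interpret cycle_split A s \<rho> p
      unfolding s_def \<rho>_def using less.prems(2,1) a by (rule cycle_split_support)
    have "a \<in> set s"
      by (subst cycle_split_support(2)[OF less.prems(2,1) a, folded s_def]) simp
    then have "card (A - set s) < card A"
      using a less.prems(1) by (intro psubset_card_mono) auto
    from less.hyps[OF this _ \<rho>_permutes] less.prems(1)
    have "q dvd fix_count (A - set s) (\<rho> ^^ q) - fix_count (A - set s) \<rho>"
      by simp
    then show ?thesis
      using period_count_split[OF less.prems(1) q] by simp
  qed
qed

lemma fix_count_funpow_prime:
  assumes "finite A" and "prime q" and "p permutes A"
  shows "fix_count A (p ^^ q) = fix_count A p + q * q_cycles q A p"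
  using prime_dvd_period_count[OF assms] fix_count_le_funpow[OF assms(1), of p q]
  unfolding q_cycles_def by simp

section \<open>Joint factorial moments of fixed points and \<open>q\<close>-cycles\<close>

definition joint_fmoment :: "nat \<Rightarrow> 'a set \<Rightarrow> nat \<Rightarrow> nat \<Rightarrow> real" where
  "joint_fmoment q A i j =
    (\<Sum>p | p permutes A. real (fix_count A p choose i) * real (q_cycles q A p choose j))"

definition joint_fmoment_formula :: "nat \<Rightarrow> nat \<Rightarrow> nat \<Rightarrow> nat \<Rightarrow> real" where
  "joint_fmoment_formula q m i j =
    (if i + q * j \<le> m then fact m / (fact i * fact j * real q ^ j) else 0)"

lemma sum_choose_shift:
  fixes f g :: "'b \<Rightarrow> nat"
  assumes "\<not> (P \<and> R)"
  shows "(\<Sum>x\<in>X. real ((f x + (if P then 1 else 0)) choose i) * real ((g x + (if R then 1 else 0)) choose j))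
    = (\<Sum>x\<in>X. real (f x choose i) * real (g x choose j))
      + (if P \<and> 0 < i then \<Sum>x\<in>X. real (f x choose (i - 1)) * real (g x choose j) else 0)
      + (if R \<and> 0 < j then \<Sum>x\<in>X. real (f x choose i) * real (g x choose (j - 1)) else 0)"
  using assms
  by (cases P; cases R; cases i; cases j) (simp_all add: sum.distrib distrib_left distrib_right)

lemma joint_fmoment_split:
  assumes A: "finite A" and a: "a \<in> A" and q: "prime q"
  shows "joint_fmoment q A i j =
    (\<Sum>xs | distinct xs \<and> set xs \<subseteq> A - {a}.
      joint_fmoment q (A - set (a # xs)) i j
      + (if length xs = 0 \<and> 0 < i then joint_fmoment q (A - set (a # xs)) (i - 1) j else 0)
      + (if Suc (length xs) = q \<and> 0 < j then joint_fmoment q (A - set (a # xs)) i (j - 1) else 0))"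
  unfolding joint_fmoment_def sum_permutes_cycle_splittings[OF A a]
proof (rule sum.cong[OF refl], goal_cases)
  case (1 xs)
  then have xs: "distinct xs" "set xs \<subseteq> A - {a}"
    by simp_all
  define A' where "A' = A - set (a # xs)"
  have "\<not> (length xs = 0 \<and> Suc (length xs) = q)"
    using prime_ge_2_nat[OF q] by auto
  moreover have "fix_count A (cycle_of_list (a # xs) \<circ> \<rho>) = fix_count A' \<rho> + (if length xs = 0 then 1 else 0)"
    and "q_cycles q A (cycle_of_list (a # xs) \<circ> \<rho>) = q_cycles q A' \<rho> + (if Suc (length xs) = q then 1 else 0)"
    if "\<rho> permutes A'" for \<rho>
  proof -
    interpret cycle_split A "a # xs" \<rho> "cycle_of_list (a # xs) \<circ> \<rho>"
      using xs a that unfolding A'_def by unfold_locales auto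
    show "fix_count A (cycle_of_list (a # xs) \<circ> \<rho>) = fix_count A' \<rho> + (if length xs = 0 then 1 else 0)"
      using fix_count_split[OF A] unfolding A'_def by simp
    show "q_cycles q A (cycle_of_list (a # xs) \<circ> \<rho>) = q_cycles q A' \<rho> + (if Suc (length xs) = q then 1 else 0)"
      using q_cycles_split[OF A q] unfolding A'_def by simp
  qed
  ultimately show ?case
    unfolding A'_def by (simp add: sum_choose_shift)
qed

lemma sum_distinct_lists_by_length:
  fixes f :: "nat \<Rightarrow> real"
  assumes B: "finite B"
  shows "(\<Sum>xs | distinct xs \<and> set xs \<subseteq> B. f (length xs)) =
    (\<Sum>k\<le>card B. fact (card B) / fact (card B - k) * f k)"
proof -
  let ?L = "{xs. distinct xs \<and> set xs \<subseteq> B}"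
  have fin: "finite ?L"
    using finite_subset_distinct[of B] B by (simp add: conj_commute)
  have img: "length ` ?L \<subseteq> {..card B}"
    using B by (auto simp: distinct_card[symmetric] intro: card_mono)
  have "(\<Sum>xs\<in>?L. f (length xs)) = (\<Sum>k\<le>card B. \<Sum>xs | xs \<in> ?L \<and> length xs = k. f (length xs))"
    by (rule sum.group[OF fin finite_atMost img, symmetric])
  also have "\<dots> = (\<Sum>k\<le>card B. fact (card B) / fact (card B - k) * f k)"
  proof (rule sum.cong[OF refl])
    fix k assume k: "k \<in> {..card B}"
    have "{xs. xs \<in> ?L \<and> length xs = k} = {xs. length xs = k \<and> distinct xs \<and> set xs \<subseteq> B}"
      by auto
    then have "card {xs. xs \<in> ?L \<and> length xs = k} = fact (card B) div fact (card B - k)"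
      using card_lists_distinct_length_eq[OF B, of k] k fact_div_fact[of "card B - k" "card B"]
      by (simp add: Suc_diff_le)
    then have "real (card {xs. xs \<in> ?L \<and> length xs = k}) = fact (card B) / fact (card B - k)"
      by (simp add: real_of_nat_div fact_dvd)
    then show "(\<Sum>xs | xs \<in> ?L \<and> length xs = k. f (length xs)) = fact (card B) / fact (card B - k) * f k"
      by simp
  qed
  finally show ?thesis .
qed

lemma card_le_Suc_diff: "card {k. k \<le> n \<and> s \<le> n - k} = Suc n - s"
proof (cases "s \<le> n")
  case True
  then have "{k. k \<le> n \<and> s \<le> n - k} = {..n - s}" by auto
  then show ?thesis using True by simp
qed (auto simp: not_le)

context
  fixes q n i j :: nat and c :: real
  assumes q: "2 \<le> q"
  defines "c \<equiv> 1 / (fact i * fact j * real q ^ j)"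
begin

lemma sum_joint_fmoment_formula:
  "(\<Sum>k\<le>n. fact n / fact (n - k) * joint_fmoment_formula q (n - k) i j) =
    real (Suc n - (i + q * j)) * fact n * c"
proof -
  have "(\<Sum>k\<le>n. fact n / fact (n - k) * joint_fmoment_formula q (n - k) i j) =
      (\<Sum>k\<le>n. if i + q * j \<le> n - k then fact n * c else 0)"
    by (rule sum.cong) (auto simp: joint_fmoment_formula_def c_def)
  also have "\<dots> = (\<Sum>k \<in> {k \<in> {..n}. i + q * j \<le> n - k}. fact n * c)"
    by (subst sum.inter_filter) auto
  finally show ?thesis
    using card_le_Suc_diff[of n "i + q * j"] by simp
qed

lemma joint_fmoment_formula_pred_i:
  assumes "0 < i"
  shows "joint_fmoment_formula q n (i - 1) j = (if i + q * j \<le> Suc n then real i * fact n * c else 0)"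
proof -
  obtain i' where i: "i = Suc i'"
    using assms by (cases i) auto
  have "real (Suc i') * fact n * c = fact n / (fact i' * fact j * real q ^ j)"
    using q by (simp add: c_def i field_simps del: of_nat_Suc)
  then show ?thesis
    by (auto simp: joint_fmoment_formula_def i)
qed

lemma joint_fmoment_formula_pred_j:
  assumes "0 < j" and "q \<le> Suc n"
  shows "fact n / fact (n - (q - 1)) * joint_fmoment_formula q (n - (q - 1)) i (j - 1) =
    (if i + q * j \<le> Suc n then real j * real q * fact n * c else 0)"
proof -
  obtain j' where j: "j = Suc j'"
    using assms by (cases j) auto
  have "i + q * j' \<le> n - (q - 1) \<longleftrightarrow> i + q * j \<le> Suc n"
    using assms q by (auto simp: j)
  moreover have "real (Suc j') * real q * fact n * c =
      fact n / fact (n - (q - 1)) * (fact (n - (q - 1)) / (fact i * fact j' * real q ^ j'))"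
    using q by (simp add: c_def j field_simps del: of_nat_Suc)
  ultimately show ?thesis
    by (simp add: joint_fmoment_formula_def j)
qed

lemma sum_fixed_point_term:
  "(\<Sum>k\<le>n. fact n / fact (n - k) *
      (if k = 0 \<and> 0 < i then joint_fmoment_formula q n (i - 1) j else 0)) =
    (if i + q * j \<le> Suc n then real i * fact n * c else 0)"
proof -
  have "(\<Sum>k\<le>n. fact n / fact (n - k) *
      (if k = 0 \<and> 0 < i then joint_fmoment_formula q n (i - 1) j else 0)) =
      (\<Sum>k\<le>n. if k = 0 then (if 0 < i then joint_fmoment_formula q n (i - 1) j else 0) else 0)"
    by (rule sum.cong) auto
  then show ?thesis
    using joint_fmoment_formula_pred_i by simp
qed

lemma sum_q_cycle_term:
  "(\<Sum>k\<le>n. fact n / fact (n - k) *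
      (if Suc k = q \<and> 0 < j then joint_fmoment_formula q (n - k) i (j - 1) else 0)) =
    (if i + q * j \<le> Suc n then real j * real q * fact n * c else 0)"
proof (cases "q \<le> Suc n \<and> 0 < j")
  case True
  have "(\<Sum>k\<le>n. fact n / fact (n - k) *
      (if Suc k = q \<and> 0 < j then joint_fmoment_formula q (n - k) i (j - 1) else 0)) =
      (\<Sum>k\<le>n. if k = q - 1 then
        fact n / fact (n - k) * joint_fmoment_formula q (n - k) i (j - 1) else 0)"
    using True q by (intro sum.cong) auto
  also have "\<dots> = fact n / fact (n - (q - 1)) * joint_fmoment_formula q (n - (q - 1)) i (j - 1)"
    using True by (simp add: le_diff_conv)
  finally show ?thesis
    using True joint_fmoment_formula_pred_j by simp
next
  case False
  then have "j = 0 \<or> \<not> i + q * j \<le> Suc n"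
    by (cases j) auto
  with False show ?thesis
    by (auto intro!: sum.neutral)
qed

lemma joint_fmoment_formula_rec:
  "(\<Sum>k\<le>n. fact n / fact (n - k) *
      (joint_fmoment_formula q (n - k) i j
       + (if k = 0 \<and> 0 < i then joint_fmoment_formula q n (i - 1) j else 0)
       + (if Suc k = q \<and> 0 < j then joint_fmoment_formula q (n - k) i (j - 1) else 0)))
    = joint_fmoment_formula q (Suc n) i j"
proof -
  have "(\<Sum>k\<le>n. fact n / fact (n - k) *
      (joint_fmoment_formula q (n - k) i j
       + (if k = 0 \<and> 0 < i then joint_fmoment_formula q n (i - 1) j else 0)
       + (if Suc k = q \<and> 0 < j then joint_fmoment_formula q (n - k) i (j - 1) else 0)))
    = real (Suc n - (i + q * j)) * fact n * c
      + (if i + q * j \<le> Suc n then real i * fact n * c else 0)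
      + (if i + q * j \<le> Suc n then real j * real q * fact n * c else 0)"
    by (simp only: distrib_left sum.distrib sum_joint_fmoment_formula sum_fixed_point_term
        sum_q_cycle_term)
  also have "\<dots> = joint_fmoment_formula q (Suc n) i j"
  proof (cases "i + q * j \<le> Suc n")
    case True
    then have "real (Suc n - (i + q * j)) + real i + real j * real q = real (Suc n)"
      by (simp add: of_nat_diff algebra_simps)
    then have "real (Suc n - (i + q * j)) * fact n * c + real i * fact n * c
        + real j * real q * fact n * c = real (Suc n) * (fact n * c)"
      by (metis distrib_right mult.assoc)
    also have "\<dots> = fact (Suc n) * c"
      by (simp only: fact_Suc mult.assoc)
    finally show ?thesis
      using True by (simp add: joint_fmoment_formula_def c_def)
  qed (simp add: joint_fmoment_formula_def)
  finally show ?thesis .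
qed

end

lemma card_Diff_distinct_Cons:
  assumes "finite A" and "a \<in> A" and "distinct xs" and "set xs \<subseteq> A - {a}"
  shows "card (A - set (a # xs)) = card A - Suc (length xs)"
proof -
  have "card (A - set (a # xs)) = card A - card (set (a # xs))"
    using assms by (intro card_Diff_subset) auto
  also have "card (set (a # xs)) = Suc (length xs)"
    using assms by (subst distinct_card) auto
  finally show ?thesis .
qed

lemma joint_fmoment_eq:
  assumes "finite A" and q: "prime q"
  shows "joint_fmoment q A i j = joint_fmoment_formula q (card A) i j"
  using assms(1)
proof (induction "card A" arbitrary: A i j rule: less_induct)
  case less
  have q2: "2 \<le> q"
    using prime_ge_2_nat[OF q] .
  show ?case
  proof (cases "A = {}")
    case True
    then show ?thesis
      using q2 by (cases i; cases j) (simp_all add: joint_fmoment_def joint_fmoment_formula_def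
          fix_count_def q_cycles_def permutes_empty)
  next
    case False
    then obtain a where a: "a \<in> A"
      by blast
    define n where "n = card (A - {a})"
    have card_A: "card A = Suc n"
      unfolding n_def by (rule card.remove[OF less.prems a])
    have IH: "joint_fmoment q (A - set (a # xs)) i' j' = joint_fmoment_formula q (n - length xs) i' j'"
      if "distinct xs" "set xs \<subseteq> A - {a}" for xs i' j'
    proof -
      have "card (A - set (a # xs)) = n - length xs"
        using card_Diff_distinct_Cons[OF less.prems a that] card_A by simp
      then show ?thesis
        using less.hyps[of "A - set (a # xs)"] less.prems card_A by simp
    qed
    have "joint_fmoment q A i j = (\<Sum>xs | distinct xs \<and> set xs \<subseteq> A - {a}.
        joint_fmoment_formula q (n - length xs) i j
        + (if length xs = 0 \<and> 0 < i then joint_fmoment_formula q n (i - 1) j else 0)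
        + (if Suc (length xs) = q \<and> 0 < j
           then joint_fmoment_formula q (n - length xs) i (j - 1) else 0))"
      unfolding joint_fmoment_split[OF less.prems a q]
    proof (rule sum.cong[OF refl], goal_cases)
      case (1 xs)
      then have xs: "distinct xs" "set xs \<subseteq> A - {a}"
        by auto
      show ?case
        unfolding IH[OF xs] by simp
    qed
    also have "\<dots> = (\<Sum>k\<le>n. fact n / fact (n - k) *
        (joint_fmoment_formula q (n - k) i j
         + (if k = 0 \<and> 0 < i then joint_fmoment_formula q n (i - 1) j else 0)
         + (if Suc k = q \<and> 0 < j then joint_fmoment_formula q (n - k) i (j - 1) else 0)))"
      unfolding n_def using less.prems by (intro sum_distinct_lists_by_length) simp
    also have "\<dots> = joint_fmoment_formula q (Suc n) i j"
      by (rule joint_fmoment_formula_rec[OF q2])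
    finally show ?thesis
      using card_A by simp
  qed
qed

section \<open>The moments of \<open>c1 n (p ^^ q)\<close>\<close>

lemma mult_choose_eq: "x * (x choose i) = Suc i * (x choose Suc i) + i * (x choose i)"
proof -
  have "Suc i * (x choose Suc i) = (x - i) * (x choose i)"
    using binomial_absorption[of i x] binomial_absorb_comp[of x i] by simp
  moreover have "x * (x choose i) = (x - i) * (x choose i) + i * (x choose i)"
    by (cases "i \<le> x") (auto simp: binomial_eq_0 simp flip: distrib_right)
  ultimately show ?thesis
    by simp
qed

lemma power_eq_sum_Stirling_choose: "(x::nat) ^ a = (\<Sum>i\<le>a. Stirling a i * fact i * (x choose i))"
proof (induction a)
  case (Suc a)
  have "x ^ Suc a = (\<Sum>i\<le>a. Stirling a i * fact i * (x * (x choose i)))"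
    using Suc by (simp add: sum_distrib_left algebra_simps)
  also have "\<dots> = (\<Sum>i\<le>a. Stirling a i * fact (Suc i) * (x choose Suc i))
      + (\<Sum>i\<le>a. Stirling a i * i * fact i * (x choose i))"
    unfolding mult_choose_eq by (simp add: sum.distrib algebra_simps)
  also have "(\<Sum>i\<le>a. Stirling a i * fact (Suc i) * (x choose Suc i))
      = (\<Sum>i\<le>Suc a. (if i = 0 then 0 else Stirling a (i - 1)) * fact i * (x choose i))"
    by (subst sum.atMost_Suc_shift) simp
  also have "(\<Sum>i\<le>a. Stirling a i * i * fact i * (x choose i))
      = (\<Sum>i\<le>Suc a. Stirling a i * i * fact i * (x choose i))"
    by simp
  also have "(\<Sum>i\<le>Suc a. (if i = 0 then 0 else Stirling a (i - 1)) * fact i * (x choose i))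
      + (\<Sum>i\<le>Suc a. Stirling a i * i * fact i * (x choose i))
      = (\<Sum>i\<le>Suc a. Stirling (Suc a) i * fact i * (x choose i))"
    unfolding sum.distrib[symmetric]
    by (intro sum.cong refl, rename_tac i, case_tac i) (simp_all add: algebra_simps)
  finally show ?case .
qed simp

definition bell :: "nat \<Rightarrow> real" where
  "bell a = (\<Sum>i\<le>a. real (Stirling a i))"

text \<open>The \<open>b\<close>-th moment of \<open>q X\<close> for \<open>X\<close> Poisson with mean \<open>1/q\<close>.\<close>
definition scaled_touchard :: "nat \<Rightarrow> nat \<Rightarrow> real" where
  "scaled_touchard q b = (\<Sum>j\<le>b. real (Stirling b j) * real q ^ (b - j))"

lemma sum_permutes_power_product:
  assumes A: "finite A" and q: "prime q" and le: "a + q * b \<le> card A"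
  shows "(\<Sum>p | p permutes A. real (fix_count A p) ^ a * (real q * real (q_cycles q A p)) ^ b) =
    fact (card A) * bell a * scaled_touchard q b"
proof -
  define c where "c i j = real (Stirling a i) * fact i * real (Stirling b j) * fact j * real q ^ b"
    for i j
  have q0: "real q > 0"
    using prime_gt_0_nat[OF q] by simp
  have power: "real x ^ k = (\<Sum>i\<le>k. real (Stirling k i) * fact i * real (x choose i))" for x k
    using arg_cong[OF power_eq_sum_Stirling_choose[of x k], of real] by simp
  have expand: "real (fix_count A p) ^ a * (real q * real (q_cycles q A p)) ^ b =
      (\<Sum>i\<le>a. \<Sum>j\<le>b. c i j *
        (real (fix_count A p choose i) * real (q_cycles q A p choose j)))" for p
    unfolding power_mult_distrib power[of "fix_count A p"] power[of "q_cycles q A p"] c_def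
    by (subst sum.swap) (simp add: sum_product sum_distrib_left mult_ac)
  have moment: "joint_fmoment q A i j = fact (card A) / (fact i * fact j * real q ^ j)"
    if "i \<le> a" "j \<le> b" for i j
  proof -
    have "i + q * j \<le> card A"
      using that le by (meson add_le_mono le_trans mult_le_mono2)
    then show ?thesis
      using joint_fmoment_eq[OF A q] by (simp add: joint_fmoment_formula_def)
  qed
  have "(\<Sum>p | p permutes A. real (fix_count A p) ^ a * (real q * real (q_cycles q A p)) ^ b) =
      (\<Sum>i\<le>a. \<Sum>j\<le>b. c i j * joint_fmoment q A i j)"
    unfolding expand joint_fmoment_def sum_distrib_left
    by (subst sum.swap, rule sum.cong[OF refl], rule sum.swap)
  also have "\<dots> = (\<Sum>i\<le>a. \<Sum>j\<le>b. fact (card A) *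
      (real (Stirling a i) * (real (Stirling b j) * real q ^ (b - j))))"
  proof (intro sum.cong refl)
    fix i j assume "i \<in> {..a}" "j \<in> {..b}"
    then have "real q ^ b = real q ^ (b - j) * real q ^ j"
      by (simp flip: power_add)
    then show "c i j * joint_fmoment q A i j = fact (card A) *
        (real (Stirling a i) * (real (Stirling b j) * real q ^ (b - j)))"
      using \<open>i \<in> {..a}\<close> \<open>j \<in> {..b}\<close> q0 by (simp add: moment c_def field_simps)
  qed
  also have "\<dots> = fact (card A) *
      ((\<Sum>i\<le>a. real (Stirling a i)) * (\<Sum>j\<le>b. real (Stirling b j) * real q ^ (b - j)))"
    by (subst sum_product) (simp only: sum_distrib_left)
  also have "\<dots> = fact (card A) * bell a * scaled_touchard q b"
    by (simp add: bell_def scaled_touchard_def)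
  finally show ?thesis .
qed

definition fix_power_moment :: "nat \<Rightarrow> nat \<Rightarrow> real" where
  "fix_power_moment q d = (\<Sum>a\<le>d. real (d choose a) * bell a * scaled_touchard q (d - a))"

lemma momentA_eq_fix_power_moment:
  assumes q: "prime q" and n: "d * q \<le> n"
  shows "momentA n q d = fix_power_moment q d"
proof -
  let ?A = "{..<n}"
  have c1: "real (c1 n (p ^^ q)) = real (fix_count ?A p) + real q * real (q_cycles q ?A p)"
    if "p permutes ?A" for p
    using fix_count_funpow_prime[OF finite_lessThan q that] by (simp add: c1_def fix_count_def)
  have le: "a + q * (d - a) \<le> card ?A" if "a \<le> d" for a
  proof -
    have "a + q * (d - a) \<le> q * a + q * (d - a)"
      using prime_gt_0_nat[OF q] by simp
    also have "\<dots> = d * q"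
      using that by (simp add: algebra_simps flip: distrib_left)
    finally show ?thesis
      using n by simp
  qed
  have "(\<Sum>p | p permutes ?A. real (c1 n (p ^^ q)) ^ d) =
      (\<Sum>p | p permutes ?A. \<Sum>a\<le>d. real (d choose a) *
        (real (fix_count ?A p) ^ a * (real q * real (q_cycles q ?A p)) ^ (d - a)))"
    by (intro sum.cong refl) (simp add: c1 binomial_ring mult.assoc)
  also have "\<dots> = (\<Sum>a\<le>d. real (d choose a) * (\<Sum>p | p permutes ?A.
        real (fix_count ?A p) ^ a * (real q * real (q_cycles q ?A p)) ^ (d - a)))"
    by (subst sum.swap) (simp add: sum_distrib_left)
  also have "\<dots> = (\<Sum>a\<le>d. real (d choose a) * (fact n * bell a * scaled_touchard q (d - a)))"
    using sum_permutes_power_product[OF finite_lessThan q le] by (intro sum.cong refl) simp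
  also have "\<dots> = fact n * fix_power_moment q d"
    by (simp add: fix_power_moment_def sum_distrib_left mult_ac)
  finally show ?thesis
    unfolding momentA_def by simp
qed

section \<open>Estimates for \<open>q \<ge> 2 ^ d\<close>\<close>

lemma Stirling_Suc_plus_power_le: "Stirling n (Suc m) + m ^ n \<le> Suc m ^ n"
proof (induction n arbitrary: m)
  case (Suc n)
  have "Stirling n m \<le> m ^ n"
  proof (cases m)
    case (Suc m')
    then show ?thesis
      using Suc.IH[of m'] by simp
  qed (cases n; simp)
  moreover have "Suc m * (Stirling n (Suc m) + m ^ n) \<le> Suc m * Suc m ^ n"
    using Suc.IH[of m] by (rule mult_le_mono2)
  ultimately show ?case
    by (simp add: algebra_simps)
qed simp

lemma Stirling_le_power: "Stirling n k \<le> k ^ n"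
proof (cases k)
  case 0
  then show ?thesis by (cases n) simp_all
next
  case (Suc m)
  then show ?thesis
    using Stirling_Suc_plus_power_le[of n m] by simp
qed

lemma bell_le: "bell a \<le> real (Suc a) * real a ^ a"
proof -
  have "bell a \<le> (\<Sum>i\<le>a. real a ^ a)"
    unfolding bell_def
  proof (rule sum_mono)
    fix i assume "i \<in> {..a}"
    then have "real (Stirling a i) \<le> real i ^ a"
      using Stirling_le_power[of a i] by (simp flip: of_nat_power)
    also have "\<dots> \<le> real a ^ a"
      using \<open>i \<in> {..a}\<close> by (intro power_mono) auto
    finally show "real (Stirling a i) \<le> real a ^ a" .
  qed
  then show ?thesis
    by simp
qed

lemma bell_nonneg: "0 \<le> bell a"
  unfolding bell_def by (intro sum_nonneg) simp

lemma scaled_touchard_nonneg: "0 \<le> scaled_touchard q b"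
  unfolding scaled_touchard_def by (intro sum_nonneg) simp

lemma two_mult_add_le: "1 \<le> m \<Longrightarrow> 2 * (r + m) \<le> (r + 1) * 2 ^ m"
proof (induction m rule: dec_induct)
  case (step m)
  have "2 \<le> (r + 1) * 2 ^ m"
    using step.hyps by (metis add_le_mono le_add2 mult_le_mono one_le_numeral one_le_power
        power_one_right mult_1 one_add_one power_increasing)
  then show ?case
    using step.IH by simp
qed simp

text \<open>The lost factor \<open>x ^ (j - r) \<ge> 2 ^ (b (j - r))\<close> outweighs the growth of \<open>j ^ b\<close>,
  because \<open>j \<le> 2 ^ (j - r) (r + 1) / 2\<close>.\<close>
lemma Stirling_term_le:
  fixes x :: real
  assumes x: "2 ^ b \<le> x" and j: "r < j" "j \<le> b"
  shows "real (Stirling b j) * x ^ (b - j) \<le> x ^ (b - r) * ((real r + 1) / 2) ^ b"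
proof -
  have x1: "1 \<le> x"
    using x by (metis one_le_power one_le_numeral order_trans)
  define m where "m = j - r"
  have m: "1 \<le> m" "j = r + m" "b - r = m + (b - j)"
    using j by (auto simp: m_def)
  have "real (2 * (r + m)) \<le> real ((r + 1) * 2 ^ m)"
    using two_mult_add_le[OF m(1), of r] by (simp only: of_nat_le_iff)
  then have "2 * real j \<le> (real r + 1) * 2 ^ m"
    using m(2) by (simp add: algebra_simps)
  then have "real j ^ b \<le> (2 ^ m * ((real r + 1) / 2)) ^ b"
    by (intro power_mono) (simp_all add: field_simps)
  also have "\<dots> = (2 ^ b) ^ m * ((real r + 1) / 2) ^ b"
    by (simp only: power_mult_distrib flip: power_mult) (simp only: mult.commute)
  also have "\<dots> \<le> x ^ m * ((real r + 1) / 2) ^ b"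
    using x by (intro mult_right_mono power_mono) auto
  finally have "real (Stirling b j) \<le> x ^ m * ((real r + 1) / 2) ^ b"
    using Stirling_le_power[of b j] by (simp add: order_trans flip: of_nat_power)
  then have "real (Stirling b j) * x ^ (b - j) \<le> x ^ m * ((real r + 1) / 2) ^ b * x ^ (b - j)"
    using x1 by (intro mult_right_mono) auto
  then show ?thesis
    using m(3) by (simp add: power_add mult_ac)
qed

lemma Stirling_tail_le:
  fixes x :: real
  assumes x: "2 ^ b \<le> x" and r: "1 \<le> r"
  shows "(\<Sum>j\<in>{r..b}. real (Stirling b j) * x ^ (b - j)) \<le>
    x ^ (b - r) * (real r ^ b + real b * ((real r + 1) / 2) ^ b)"
proof (cases "r \<le> b")
  case False
  then show ?thesis
    using x by (simp add: zero_le_mult_iff)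
next
  case True
  have x1: "1 \<le> x"
    using x by (metis one_le_power one_le_numeral order_trans)
  have "{r..b} = insert r {Suc r..b}"
    using True by auto
  then have "(\<Sum>j\<in>{r..b}. real (Stirling b j) * x ^ (b - j)) =
      real (Stirling b r) * x ^ (b - r) + (\<Sum>j\<in>{Suc r..b}. real (Stirling b j) * x ^ (b - j))"
    by simp
  also have "\<dots> \<le> real r ^ b * x ^ (b - r) + (\<Sum>j\<in>{Suc r..b}. x ^ (b - r) * ((real r + 1) / 2) ^ b)"
    using Stirling_le_power[of b r] Stirling_term_le[OF x] x1
    by (intro add_mono sum_mono mult_right_mono) (auto simp flip: of_nat_power)
  also have "\<dots> \<le> x ^ (b - r) * (real r ^ b + real b * ((real r + 1) / 2) ^ b)"
    using x1 by (simp add: algebra_simps mult_right_mono)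
  finally show ?thesis .
qed

lemma scaled_touchard_le:
  assumes "1 \<le> b" and "2 ^ b \<le> real q"
  shows "scaled_touchard q b \<le> real q ^ (b - 1) * (1 + real b)"
proof -
  have "scaled_touchard q b = (\<Sum>j\<in>{1..b}. real (Stirling b j) * real q ^ (b - j))"
    unfolding scaled_touchard_def using assms(1)
    by (cases b) (simp_all add: atMost_atLeast0 sum.atLeast_Suc_atMost)
  also have "\<dots> \<le> real q ^ (b - 1) * (1 + real b)"
    using Stirling_tail_le[OF assms(2), of 1] by simp
  finally show ?thesis .
qed

lemma sum_atMost_split: "r \<le> Suc b \<Longrightarrow> (\<Sum>j\<le>b. f j) = (\<Sum>j<r. f j) + (\<Sum>j\<in>{r..b}. f j)"
  by (subst sum.union_disjoint[symmetric]) (auto intro!: sum.cong)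

lemma square_le_two_pow: "(d::nat) ^ 2 \<le> 2 * 2 ^ d"
proof (induction d)
  case (Suc d)
  show ?case
  proof (cases "d < 3")
    case True
    then have "d = 0 \<or> d = 1 \<or> d = 2" by auto
    then show ?thesis by (auto simp: power2_eq_square)
  next
    case False
    then have "3 * d \<le> d * d"
      by (intro mult_right_mono) auto
    moreover have "Suc d * Suc d = d * d + 2 * d + 1"
      by simp
    ultimately have "Suc d ^ 2 \<le> 2 * d ^ 2"
      unfolding power2_eq_square using False by linarith
    also have "\<dots> \<le> 2 * (2 * 2 ^ d)"
      using Suc by simp
    finally show ?thesis by simp
  qed
qed simp

lemma three_terms_le_power:
  fixes x :: real
  assumes "0 \<le> x"
  shows "x + x * (x + 1) + x * (x + 1) ^ 6 \<le> 3 * (x + 1) ^ 7"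
proof -
  have "x \<le> (x + 1) ^ 7"
    using assms power_increasing[of 1 7 "x + 1"] by simp
  moreover have "x * (x + 1) \<le> (x + 1) ^ 2"
    using assms by (simp add: power2_eq_square mult_right_mono)
  then have "x * (x + 1) \<le> (x + 1) ^ 7"
    using assms power_increasing[of 2 7 "x + 1"] by simp
  moreover have "x * (x + 1) ^ 6 \<le> (x + 1) * (x + 1) ^ 6"
    using assms by (intro mult_right_mono) simp_all
  then have "x * (x + 1) ^ 6 \<le> (x + 1) ^ 7"
    by (simp flip: power_Suc)
  ultimately show ?thesis
    by simp
qed

context
  fixes q d :: nat
  assumes d3: "3 \<le> d" and q: "2 ^ d \<le> real q"
begin

lemma two_pow_le_q: "b \<le> d \<Longrightarrow> 2 ^ b \<le> real q"
  using q by (meson order_trans power_increasing one_le_numeral)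

lemma d_le_q: "real d \<le> real q"
proof -
  have "real d < real (2 ^ d)"
    using less_exp by (simp only: of_nat_less_iff)
  then show ?thesis
    using q by (simp only: of_nat_power of_nat_numeral)
qed

lemma fix_power_moment_expansion:
  "fix_power_moment q d = real q ^ (d - 1) + real q ^ (d - 2) * (real d + 2 ^ (d - 1) - 1)
    + (\<Sum>j\<in>{3..d}. real (Stirling d j) * real q ^ (d - j))
    + real d * (\<Sum>j\<in>{2..d - 1}. real (Stirling (d - 1) j) * real q ^ (d - 1 - j))
    + (\<Sum>a\<in>{2..d}. real (d choose a) * bell a * scaled_touchard q (d - a))"
proof -
  obtain m where "d = 3 + m"
    using le_Suc_ex[OF d3] by blast
  then have m: "d = Suc (Suc (Suc m))"
    by simp
  have "Stirling d 2 = 2 ^ (d - 1) - 1"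
    using Stirling_2[of "Suc (Suc m)"] by (simp only: m numeral_2_eq_2 diff_Suc_1)
  then have S2: "real (Stirling d 2) = 2 ^ (d - 1) - 1"
    by (simp add: of_nat_diff)
  have "scaled_touchard q d = (\<Sum>j<3. real (Stirling d j) * real q ^ (d - j))
      + (\<Sum>j\<in>{3..d}. real (Stirling d j) * real q ^ (d - j))"
    unfolding scaled_touchard_def using d3 by (intro sum_atMost_split) simp
  moreover have "(\<Sum>j<3. real (Stirling d j) * real q ^ (d - j)) =
      real q ^ (d - 1) + (2 ^ (d - 1) - 1) * real q ^ (d - 2)"
  proof -
    have "Stirling d 0 = 0" "Stirling d (Suc 0) = 1"
      by (simp_all only: m Stirling.simps(3) Stirling_1)
    then show ?thesis
      using S2 by (simp add: numeral_3_eq_3 numeral_2_eq_2)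
  qed
  moreover have "scaled_touchard q (d - 1) = (\<Sum>j<2. real (Stirling (d - 1) j) * real q ^ (d - 1 - j))
      + (\<Sum>j\<in>{2..d - 1}. real (Stirling (d - 1) j) * real q ^ (d - 1 - j))"
    unfolding scaled_touchard_def using d3 by (intro sum_atMost_split) simp
  moreover have "(\<Sum>j<2. real (Stirling (d - 1) j) * real q ^ (d - 1 - j)) = real q ^ (d - 2)"
  proof -
    have "Stirling (d - 1) 0 = 0" "Stirling (d - 1) (Suc 0) = 1"
      by (simp_all only: m diff_Suc_1 Stirling.simps(3) Stirling_1)
    then show ?thesis
      by (simp add: numeral_2_eq_2)
  qed
  moreover have "fix_power_moment q d = (\<Sum>a<2. real (d choose a) * bell a * scaled_touchard q (d - a))
      + (\<Sum>a\<in>{2..d}. real (d choose a) * bell a * scaled_touchard q (d - a))"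
    unfolding fix_power_moment_def using d3 by (intro sum_atMost_split) simp
  moreover have "(\<Sum>a<2. real (d choose a) * bell a * scaled_touchard q (d - a)) =
      scaled_touchard q d + real d * scaled_touchard q (d - 1)"
    by (simp add: numeral_2_eq_2 bell_def)
  ultimately show ?thesis
    by (simp add: algebra_simps)
qed

lemma Stirling_tail_3_le:
  "(\<Sum>j\<in>{3..d}. real (Stirling d j) * real q ^ (d - j)) \<le> real q ^ (d - 3) * (3 ^ d + real d * 2 ^ d)"
  using Stirling_tail_le[OF q, of 3] by simp

lemma Stirling_tail_2_le:
  "(\<Sum>j\<in>{2..d - 1}. real (Stirling (d - 1) j) * real q ^ (d - 1 - j)) \<le>
    real q ^ (d - 3) * ((real d + 1) * 2 ^ d)"
proof -
  have "(\<Sum>j\<in>{2..d - 1}. real (Stirling (d - 1) j) * real q ^ (d - 1 - j)) \<le>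
      real q ^ (d - 1 - 2) * (2 ^ (d - 1) + real (d - 1) * (3 / 2) ^ (d - 1))"
    using Stirling_tail_le[OF two_pow_le_q[of "d - 1"], of 2] by simp
  also have "\<dots> \<le> real q ^ (d - 3) * ((real d + 1) * 2 ^ d)"
  proof (intro mult_mono)
    have "(3 / 2 :: real) ^ (d - 1) \<le> 2 ^ (d - 1)"
      by (intro power_mono) auto
    also have "(2 :: real) ^ (d - 1) \<le> 2 ^ d"
      by (intro power_increasing) auto
    finally have "real (d - 1) * (3 / 2) ^ (d - 1) \<le> real d * 2 ^ d"
      by (intro mult_mono) auto
    with power_increasing[of "d - 1" d "2 :: real"]
    have "2 ^ (d - 1) + real (d - 1) * (3 / 2) ^ (d - 1) \<le> 2 ^ d + real d * 2 ^ d"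
      by (intro add_mono) auto
    then show "2 ^ (d - 1) + real (d - 1) * (3 / 2) ^ (d - 1) \<le> (real d + 1) * 2 ^ d"
      by (simp add: algebra_simps)
  qed (simp_all add: numeral_3_eq_3)
  finally show ?thesis .
qed

lemma bell_le_top: "bell d \<le> real q ^ (d - 3) * ((real d + 1) ^ 6 * 2 ^ d)"
proof -
  have "bell d \<le> (real d + 1) * real d ^ d"
    using bell_le[of d] by (simp add: add.commute)
  also have "\<dots> = (real d + 1) * real d ^ 3 * real d ^ (d - 3)"
    using d3 by (simp add: mult.assoc flip: power_add)
  also have "\<dots> \<le> (real d + 1) * real d ^ 3 * real q ^ (d - 3)"
    using d_le_q by (intro mult_left_mono power_mono) auto
  also have "\<dots> \<le> (real d + 1) ^ 6 * 2 ^ d * real q ^ (d - 3)"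
  proof (rule mult_right_mono)
    have "real d ^ 3 \<le> (real d + 1) ^ 3"
      by (intro power_mono) auto
    also have "\<dots> \<le> (real d + 1) ^ 5"
      by (intro power_increasing) auto
    finally have "(real d + 1) * real d ^ 3 \<le> (real d + 1) * (real d + 1) ^ 5"
      by (intro mult_left_mono) auto
    also have "\<dots> = (real d + 1) ^ 6 * 1"
      by (simp flip: power_Suc)
    also have "\<dots> \<le> (real d + 1) ^ 6 * 2 ^ d"
      by (intro mult_left_mono) simp_all
    finally show "(real d + 1) * real d ^ 3 \<le> (real d + 1) ^ 6 * 2 ^ d" .
  qed simp
  finally show ?thesis
    by (simp add: mult.commute)
qed

lemma binomial_bell_touchard_le_power:
  assumes a: "a < d"
  shows "real (d choose a) * bell a * scaled_touchard q (d - a) \<le>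
    (real d + 1) ^ 2 * real d ^ (2 * a) * real q ^ (d - a - 1)"
proof -
  have choose: "real (d choose a) \<le> real d ^ a"
    using binomial_le_pow[of a d] a by (simp flip: of_nat_le_iff)
  have "real (Suc a) * real a ^ a \<le> (real d + 1) * real d ^ a"
    using a by (intro mult_mono power_mono) auto
  with bell_le[of a] have bell: "bell a \<le> (real d + 1) * real d ^ a"
    by linarith
  have "scaled_touchard q (d - a) \<le> real q ^ (d - a - 1) * (1 + real (d - a))"
    using a by (intro scaled_touchard_le two_pow_le_q) auto
  also have "\<dots> \<le> real q ^ (d - a - 1) * (real d + 1)"
    using a by (intro mult_left_mono) auto
  finally have touchard: "scaled_touchard q (d - a) \<le> real q ^ (d - a - 1) * (real d + 1)" .
  have "real (d choose a) * bell a * scaled_touchard q (d - a) \<le>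
      real d ^ a * ((real d + 1) * real d ^ a) * (real q ^ (d - a - 1) * (real d + 1))"
    using choose bell touchard by (intro mult_mono) (auto simp: bell_nonneg scaled_touchard_nonneg)
  also have "\<dots> = (real d + 1) ^ 2 * (real d ^ a * real d ^ a) * real q ^ (d - a - 1)"
    by (simp add: power2_eq_square mult_ac)
  also have "real d ^ a * real d ^ a = real d ^ (2 * a)"
    by (simp only: mult_2 power_add)
  finally show ?thesis .
qed

lemma binomial_bell_touchard_le:
  assumes a: "2 \<le> a" "a < d"
  shows "real (d choose a) * bell a * scaled_touchard q (d - a) \<le>
    real q ^ (d - 3) * ((real d + 1) ^ 6 * 2 ^ d)"
proof -
  have "real (d ^ 2) \<le> real (2 * 2 ^ d)"
    using square_le_two_pow[of d] by (simp only: of_nat_le_iff)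
  then have "real d ^ 2 \<le> 2 * 2 ^ d"
    by simp
  with q have square: "real d ^ 2 \<le> 2 * real q"
    by linarith
  have d_power: "real d ^ (2 * a) \<le> real d ^ 4 * (2 ^ (a - 2) * real q ^ (a - 2))"
  proof -
    have "2 * a = 4 + 2 * (a - 2)"
      using a by simp
    then have "real d ^ (2 * a) = real d ^ 4 * (real d ^ 2) ^ (a - 2)"
      by (simp only: power_add power_mult)
    moreover have "(real d ^ 2) ^ (a - 2) \<le> (2 * real q) ^ (a - 2)"
      by (rule power_mono[OF square]) simp
    ultimately show ?thesis
      by (simp add: power_mult_distrib mult_left_mono)
  qed
  have q_power: "real q ^ (a - 2) * real q ^ (d - a - 1) = real q ^ (d - 3)"
  proof -
    have "(a - 2) + (d - a - 1) = d - 3"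
      using a by simp
    then show ?thesis
      by (simp only: power_add[symmetric])
  qed
  have polynomial: "(real d + 1) ^ 2 * real d ^ 4 * 2 ^ (a - 2) \<le> (real d + 1) ^ 6 * 2 ^ d"
  proof -
    have "real d ^ 4 \<le> (real d + 1) ^ 4"
      by (intro power_mono) auto
    then have "(real d + 1) ^ 2 * real d ^ 4 \<le> (real d + 1) ^ 6"
      using mult_left_mono[of "real d ^ 4" "(real d + 1) ^ 4" "(real d + 1) ^ 2"]
      by (simp flip: power_add)
    moreover have "(2 :: real) ^ (a - 2) \<le> 2 ^ d"
      using a by (intro power_increasing) auto
    ultimately show ?thesis
      by (intro mult_mono) simp_all
  qed
  have "real (d choose a) * bell a * scaled_touchard q (d - a) \<le>
      (real d + 1) ^ 2 * real d ^ (2 * a) * real q ^ (d - a - 1)"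
    by (rule binomial_bell_touchard_le_power[OF a(2)])
  also have "\<dots> \<le> (real d + 1) ^ 2 * (real d ^ 4 * (2 ^ (a - 2) * real q ^ (a - 2))) * real q ^ (d - a - 1)"
    using d_power by (intro mult_right_mono mult_left_mono) simp_all
  also have "\<dots> = (real d + 1) ^ 2 * real d ^ 4 * 2 ^ (a - 2) * real q ^ (d - 3)"
    unfolding q_power[symmetric] by (simp only: mult_ac)
  also have "\<dots> \<le> (real d + 1) ^ 6 * 2 ^ d * real q ^ (d - 3)"
    using polynomial by (rule mult_right_mono) simp
  finally show ?thesis
    by (simp only: mult_ac)
qed

lemma binomial_bell_touchard_sum_le:
  "(\<Sum>a\<in>{2..d}. real (d choose a) * bell a * scaled_touchard q (d - a)) \<le>
    real q ^ (d - 3) * (real d * (real d + 1) ^ 6 * 2 ^ d)"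
proof -
  have "(\<Sum>a\<in>{2..d}. real (d choose a) * bell a * scaled_touchard q (d - a)) \<le>
      (\<Sum>a\<in>{2..d}. real q ^ (d - 3) * ((real d + 1) ^ 6 * 2 ^ d))"
  proof (rule sum_mono)
    fix a assume "a \<in> {2..d}"
    then consider "2 \<le> a" "a < d" | "a = d"
      by fastforce
    then show "real (d choose a) * bell a * scaled_touchard q (d - a) \<le>
        real q ^ (d - 3) * ((real d + 1) ^ 6 * 2 ^ d)"
    proof cases
      case 1
      then show ?thesis
        by (rule binomial_bell_touchard_le)
    next
      case 2
      then show ?thesis
        using bell_le_top by (simp add: scaled_touchard_def)
    qed
  qed
  also have "\<dots> = real (d - 1) * (real q ^ (d - 3) * ((real d + 1) ^ 6 * 2 ^ d))"
    using d3 by (simp add: Suc_diff_le)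
  also have "\<dots> \<le> real d * (real q ^ (d - 3) * ((real d + 1) ^ 6 * 2 ^ d))"
    by (intro mult_right_mono) simp_all
  finally show ?thesis
    by (simp add: mult_ac)
qed

lemma fix_power_moment_error_bounds:
  defines "E \<equiv> fix_power_moment q d - real q ^ (d - 1) - real q ^ (d - 2) * (real d + 2 ^ (d - 1) - 1)"
  shows "0 \<le> E" and "E \<le> real q ^ (d - 3) * (3 ^ d + 3 * (real d + 1) ^ 7 * 2 ^ d)"
proof -
  define x where "x = real q ^ (d - 3)"
  define R0 where "R0 = (\<Sum>j\<in>{3..d}. real (Stirling d j) * real q ^ (d - j))"
  define R1 where "R1 = (\<Sum>j\<in>{2..d - 1}. real (Stirling (d - 1) j) * real q ^ (d - 1 - j))"
  define R2 where "R2 = (\<Sum>a\<in>{2..d}. real (d choose a) * bell a * scaled_touchard q (d - a))"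
  have E: "E = R0 + real d * R1 + R2"
    unfolding E_def R0_def R1_def R2_def fix_power_moment_expansion by simp
  have "0 \<le> R0" "0 \<le> R1" "0 \<le> R2"
    unfolding R0_def R1_def R2_def
    by (auto intro!: sum_nonneg mult_nonneg_nonneg bell_nonneg scaled_touchard_nonneg)
  then show "0 \<le> E"
    unfolding E by simp
  have "real d * R1 \<le> real d * (x * ((real d + 1) * 2 ^ d))"
    using Stirling_tail_2_le unfolding R1_def x_def by (intro mult_left_mono) simp_all
  then have "E \<le> x * (3 ^ d + real d * 2 ^ d) + real d * (x * ((real d + 1) * 2 ^ d))
      + x * (real d * (real d + 1) ^ 6 * 2 ^ d)"
    using Stirling_tail_3_le binomial_bell_touchard_sum_le
    unfolding E R0_def R2_def x_def by linarith
  also have "\<dots> = x * (3 ^ d + (real d + real d * (real d + 1) + real d * (real d + 1) ^ 6) * 2 ^ d)"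
    by (simp add: algebra_simps)
  also have "\<dots> \<le> x * (3 ^ d + 3 * (real d + 1) ^ 7 * 2 ^ d)"
    using three_terms_le_power[of "real d"] unfolding x_def
    by (intro mult_left_mono add_left_mono mult_right_mono) simp_all
  finally show "E \<le> real q ^ (d - 3) * (3 ^ d + 3 * (real d + 1) ^ 7 * 2 ^ d)"
    unfolding x_def .
qed

lemma fix_power_moment_deviation:
  "\<bar>fix_power_moment q d - (1 + real q ^ (d - 1)) - real q ^ (d - 2) * (real d + 2 ^ (d - 1) - 1)\<bar>
    \<le> real q ^ (d - 3) * (2 * 3 ^ d + 3 * (real d + 1) ^ 7 * 2 ^ d)"
proof -
  define E where "E = fix_power_moment q d - real q ^ (d - 1) - real q ^ (d - 2) * (real d + 2 ^ (d - 1) - 1)"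
  have "\<bar>E - 1\<bar> \<le> E + 1"
    using fix_power_moment_error_bounds(1) unfolding E_def by linarith
  also have "\<dots> \<le> real q ^ (d - 3) * (3 ^ d + 3 * (real d + 1) ^ 7 * 2 ^ d) + real q ^ (d - 3) * 3 ^ d"
    using fix_power_moment_error_bounds(2) mult_mono[of 1 "real q ^ (d - 3)" 1 "3 ^ d :: real"]
      two_pow_le_q[of 0] unfolding E_def by simp
  finally show ?thesis
    unfolding E_def by (simp add: algebra_simps)
qed

end

lemma sigma_prime_of_nat:
  assumes "prime q"
  shows "sigma (real k) q = 1 + real q ^ k"
proof -
  have "{d. d dvd q} = {1, q}" "q \<noteq> 1" "0 < q"
    using assms by (auto simp: prime_nat_iff)
  then show ?thesis
    unfolding sigma_def by (simp add: powr_realpow)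
qed

lemma fix_power_moment_1: "fix_power_moment q 1 = 2"
  by (simp add: fix_power_moment_def bell_def scaled_touchard_def)

lemma fix_power_moment_2: "fix_power_moment q 2 = real q + 5"
  by (simp add: fix_power_moment_def bell_def scaled_touchard_def numeral_2_eq_2 numeral_3_eq_3)

lemma poly_two_pow_le_three_pow: "\<exists>K>0. \<forall>d::nat. (real d + 1) ^ 7 * 2 ^ d \<le> K * 3 ^ d"
proof -
  have "(\<lambda>d::nat. (real d + 1) ^ 7 * 2 ^ d / 3 ^ d) \<longlonglongrightarrow> 0"
    by real_asymp
  then have "Bseq (\<lambda>d::nat. (real d + 1) ^ 7 * 2 ^ d / 3 ^ d)"
    by (rule convergent_imp_Bseq[OF convergentI])
  then obtain K where "K > 0" "\<And>d. norm ((real d + 1) ^ 7 * 2 ^ d / 3 ^ d) \<le> K"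
    unfolding Bseq_def by blast
  then show ?thesis
    by (intro exI[of _ K]) (auto simp: field_simps)
qed

lemma two_pow_le_of_le_log:
  assumes "real d \<le> ln (real q) / ln 2" and "0 < q"
  shows "2 ^ d \<le> real q"
proof -
  have "ln (2 ^ d) \<le> ln (real q)"
    using assms(1) by (simp add: ln_realpow field_simps)
  then show ?thesis
    using assms(2) by simp
qed

lemma momentA_deviation:
  assumes q: "prime q" and d: "3 \<le> d" "2 ^ d \<le> real q" and n: "d * q \<le> n"
  shows "\<bar>momentA n q d - sigma (real d - 1) q - real q ^ (d - 2) * (real d + 2 ^ (d - 1) - 1)\<bar>
    \<le> real q ^ (d - 3) * (2 * 3 ^ d + 3 * (real d + 1) ^ 7 * 2 ^ d)"
  using fix_power_moment_deviation[OF d] sigma_prime_of_nat[OF q, of "d - 1"] d(1)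
  by (simp add: momentA_eq_fix_power_moment[OF q n] of_nat_diff)

theorem lemma5p2:
  "\<exists>C::real. C > 0 \<and>
     (\<forall>q \<delta> n :: nat. prime q \<and> \<delta> > 0 \<and> real \<delta> \<le> ln (real q) / ln 2 \<and> n \<ge> \<delta> * q \<longrightarrow>
        (\<delta> = 1 \<longrightarrow> momentA n q \<delta> = sigma 0 q) \<and>
        (\<delta> = 2 \<longrightarrow> momentA n q \<delta> = sigma 1 q + (sigma 0 q)^2) \<and>
        (\<delta> \<ge> 3 \<longrightarrow>
           \<bar>momentA n q \<delta> - sigma (real \<delta> - 1) q
              - real q ^ (\<delta> - 2) * (real \<delta> + 2 ^ (\<delta> - 1) - 1)\<bar>
           \<le> C * 3 ^ \<delta> * real q ^ (\<delta> - 3)))"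
proof -
  obtain K where K: "K > 0" "\<And>d::nat. (real d + 1) ^ 7 * 2 ^ d \<le> K * 3 ^ d"
    using poly_two_pow_le_three_pow by blast
  show ?thesis
  proof (intro exI[of _ "2 + 3 * K"] conjI allI impI)
    fix q \<delta> n :: nat
    assume H: "prime q \<and> \<delta> > 0 \<and> real \<delta> \<le> ln (real q) / ln 2 \<and> n \<ge> \<delta> * q"
    then have q: "prime q" and n: "\<delta> * q \<le> n"
      by auto
    have A: "momentA n q \<delta> = fix_power_moment q \<delta>"
      using momentA_eq_fix_power_moment[OF q n] .
    note sigma = sigma_prime_of_nat[OF q]
    show "momentA n q \<delta> = sigma 0 q" if "\<delta> = 1"
      using A that sigma[of 0] fix_power_moment_1[of q] by simp
    show "momentA n q \<delta> = sigma 1 q + (sigma 0 q)^2" if "\<delta> = 2"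
      using A that sigma[of 0] sigma[of 1] fix_power_moment_2[of q] by simp
    assume d3: "3 \<le> \<delta>"
    have Q: "2 ^ \<delta> \<le> real q"
      using H prime_gt_0_nat[OF q] by (intro two_pow_le_of_le_log) auto
    have "real q ^ (\<delta> - 3) * (2 * 3 ^ \<delta> + 3 * ((real \<delta> + 1) ^ 7 * 2 ^ \<delta>)) \<le>
        real q ^ (\<delta> - 3) * ((2 + 3 * K) * 3 ^ \<delta>)"
      using K(2)[of \<delta>] by (intro mult_left_mono) (simp_all add: algebra_simps)
    with momentA_deviation[OF q d3 Q n]
    show "\<bar>momentA n q \<delta> - sigma (real \<delta> - 1) q
        - real q ^ (\<delta> - 2) * (real \<delta> + 2 ^ (\<delta> - 1) - 1)\<bar> \<le> (2 + 3 * K) * 3 ^ \<delta> * real q ^ (\<delta> - 3)"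
      by (simp add: mult_ac)
  qed (use K in simp)
qed

end
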